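(* Let $E$ and $F$ be Banach lattices. If each weak Dunford–Pettis operator from $E$ into $F$ is uaw-Dunford–Pettis, then the norm of $E'$ is order continuous or the norm of $F$ is order continuous.
   Context: All operators are continuous linear operators. A net $(x_\alpha)$ in a Banach lattice $E$ is uaw-convergent to $x$ (written $x_\alpha\xrightarrow{uaw}x$) if $|x_\alpha-x|\wedge u\to 0$ weakly for every $u\in E_+$. An operator $T$ from a Banach lattice $E$ into a Banach space $X$ is uaw-Dunford–Pettis if for every norm bounded sequence $(x_n)$ in $E$ with $x_n\xrightarrow{uaw}0$ one has $\|Tx_n\|\to 0$. An operator $T:X\to Y$ between Banach spaces is weak Dunford–Pettis if $f_n(Tx_n)\to 0$ for every weakly null sequence $(x_n)$ in $X$ and every weakly null sequence $(f_n)$ in $Y'$. *)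

theory Defs
  imports "HOL-Analysis.Analysis"
begin

class banach_lattice = banach + ordered_real_vector + lattice +
  assumes norm_lattice_mono:
    "sup x (- x) \<le> sup y (- y) \<Longrightarrow> norm x \<le> norm y"

definition lat_abs :: "'a::banach_lattice \<Rightarrow> 'a" where
  "lat_abs x = sup x (- x)"

definition weakly_null :: "(nat \<Rightarrow> 'a::real_normed_vector) \<Rightarrow> bool" where
  "weakly_null x \<longleftrightarrow> (\<forall>f :: 'a \<Rightarrow>\<^sub>L real. (\<lambda>n. blinfun_apply f (x n)) \<longlonglongrightarrow> 0)"

definition uaw_null :: "(nat \<Rightarrow> 'a::banach_lattice) \<Rightarrow> bool" where
  "uaw_null x \<longleftrightarrow> (\<forall>u. 0 \<le> u \<longrightarrow> weakly_null (\<lambda>n. inf (lat_abs (x n)) u))"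

definition uaw_DP :: "('a::banach_lattice \<Rightarrow>\<^sub>L 'b::real_normed_vector) \<Rightarrow> bool" where
  "uaw_DP T \<longleftrightarrow> (\<forall>x :: nat \<Rightarrow> 'a. bounded (range x) \<and> uaw_null x \<longrightarrow>
      (\<lambda>n. norm (blinfun_apply T (x n))) \<longlonglongrightarrow> 0)"

definition weak_DP :: "('a::real_normed_vector \<Rightarrow>\<^sub>L 'b::real_normed_vector) \<Rightarrow> bool" where
  "weak_DP T \<longleftrightarrow> (\<forall>(x :: nat \<Rightarrow> 'a) (f :: nat \<Rightarrow> ('b \<Rightarrow>\<^sub>L real)).
      weakly_null x \<and> weakly_null f \<longrightarrow>
      (\<lambda>n. blinfun_apply (f n) (blinfun_apply T (x n))) \<longlonglongrightarrow> 0)"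

text \<open>Order continuity of a norm w.r.t. an order relation le: every downward directed set
  with infimum 0 (i.e. a net decreasing to 0) has infimum of norms 0.\<close>
definition oc_norm_rel :: "('a::real_normed_vector \<Rightarrow> 'a \<Rightarrow> bool) \<Rightarrow> bool" where
  "oc_norm_rel le \<longleftrightarrow> (\<forall>D. D \<noteq> {} \<and> (\<forall>x\<in>D. \<forall>y\<in>D. \<exists>z\<in>D. le z x \<and> le z y)
      \<and> (\<forall>x\<in>D. le 0 x) \<and> (\<forall>l. (\<forall>x\<in>D. le l x) \<longrightarrow> le l 0)
      \<longrightarrow> (\<forall>e>0. \<exists>x\<in>D. norm x < e))"

definition dual_le :: "('a::banach_lattice \<Rightarrow>\<^sub>L real) \<Rightarrow> ('a \<Rightarrow>\<^sub>L real) \<Rightarrow> bool" where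
  "dual_le f g \<longleftrightarrow> (\<forall>x. 0 \<le> x \<longrightarrow> blinfun_apply f x \<le> blinfun_apply g x)"

abbreviation order_continuous_norm :: "'a::banach_lattice itself \<Rightarrow> bool" where
  "order_continuous_norm _ \<equiv> oc_norm_rel ((\<le>) :: 'a \<Rightarrow> 'a \<Rightarrow> bool)"

abbreviation dual_order_continuous_norm :: "'a::banach_lattice itself \<Rightarrow> bool" where
  "dual_order_continuous_norm _ \<equiv> oc_norm_rel (dual_le :: ('a \<Rightarrow>\<^sub>L real) \<Rightarrow> _ \<Rightarrow> bool)"

end

theory Submission
  imports Defs "HOL-Library.Lattice_Algebras"
begin

text \<open>
  Suppose the norm of E' is not order continuous: some downward directed set D of positive
  functionals has infimum 0 but norms bounded below by e > 0. Because such an infimum is computed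
  pointwise on the positive cone of E, one can pick inductively functionals phi_(n+1) <= phi_n
  in D and positive vectors z_n of norm at most 1 with phi_(n+1) z_n > e/2 and
  phi_(n+1) s_n tiny, where s_n = z_0 + ... + z_(n-1). The vectors x_n = (z_n - M_n s_n)^+ with
  large weights M_n are then almost disjoint, hence uaw-null, while phi_0 x_n >= e/4.
  For y <> 0 in F the rank-one operator x |-> phi_0(x) y is weak Dunford-Pettis but does not
  send (x_n) to a norm null sequence. So the hypothesis forces E' to have order continuous norm
  unless F = 0, and the zero space has order continuous norm trivially.
\<close>

section \<open>Inequalities in vector lattices\<close>

class riesz_space = ordered_real_vector + lattice
begin
subclass lattice_ab_group_add ..
end

subclass (in banach_lattice) riesz_space ..

lemma inf_add_le:
  fixes y a b :: "'a::lattice_ab_group_add"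
  assumes "0 \<le> y" "0 \<le> a" "0 \<le> b"
  shows "inf y (a + b) \<le> inf y a + inf y b"
proof -
  have "inf y a + inf y b = inf (inf (y + y) (y + b)) (inf (a + y) (a + b))"
    by (simp add: add_inf_distrib_left add_inf_distrib_right inf_aci)
  moreover have "inf y (a + b) \<le> inf (inf (y + y) (y + b)) (inf (a + y) (a + b))"
    using assms by (simp add: le_infI1 le_infI2 add_increasing add_increasing2)
  ultimately show ?thesis by simp
qed

lemma inf_sum_le:
  fixes y :: "'a::lattice_ab_group_add"
  assumes "finite I" "0 \<le> y" "\<And>i. i \<in> I \<Longrightarrow> 0 \<le> a i"
  shows "inf y (\<Sum>i\<in>I. a i) \<le> (\<Sum>i\<in>I. inf y (a i))"
  using assms
proof (induction I rule: finite_induct)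
  case empty
  then show ?case by simp
next
  case (insert i I)
  have "inf y (\<Sum>j\<in>insert i I. a j) \<le> inf y (a i) + inf y (\<Sum>j\<in>I. a j)"
    using insert by (simp add: inf_add_le sum_nonneg)
  also have "\<dots> \<le> inf y (a i) + (\<Sum>j\<in>I. inf y (a j))"
    using insert by (simp add: add_left_mono)
  finally show ?case using insert by simp
qed

lemma inf_pprt_neg_nprt: "inf (pprt c) (- nprt c) = (0::'a::lattice_ab_group_add)"
proof -
  have "sup c 0 + sup (- c) 0 = sup (sup c 0 + - c) (sup c 0 + 0)"
    by (rule add_sup_distrib_left)
  also have "sup c 0 + - c = sup (c + - c) (0 + - c)"
    by (rule add_sup_distrib_right)
  finally have "pprt c + (- nprt c) = sup (pprt c) (- nprt c)"
    by (simp add: pprt_def nprt_def neg_inf_eq_sup sup_aci)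
  then show ?thesis
    using add_eq_inf_sup[of "pprt c" "- nprt c"] by simp
qed

lemma pprt_diff_le: "0 \<le> a \<Longrightarrow> 0 \<le> b \<Longrightarrow> pprt (a - b) \<le> (a::'a::lattice_ab_group_add)"
  using pprt_mono[of "a - b" a] by simp

lemma inf_of_nat_scaleR_le:
  fixes x y :: "'a::riesz_space"
  assumes "0 \<le> x" "0 \<le> y" "inf x y = 0"
  shows "inf (real n *\<^sub>R x) y \<le> 0"
proof (induction n)
  case 0
  then show ?case using assms by simp
next
  case (Suc n)
  have "inf (real (Suc n) *\<^sub>R x) y = inf y (real n *\<^sub>R x + x)"
    by (simp add: algebra_simps inf.commute)
  also have "\<dots> \<le> inf y (real n *\<^sub>R x) + inf y x"
    using assms by (intro inf_add_le scaleR_nonneg_nonneg) auto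
  also have "\<dots> \<le> 0"
    using Suc assms by (simp add: inf.commute add_nonpos_nonpos)
  finally show ?case .
qed

lemma inf_scaleR_eq_0:
  fixes x y :: "'a::riesz_space"
  assumes "0 \<le> x" "0 \<le> y" "inf x y = 0" "0 \<le> t"
  shows "inf (t *\<^sub>R x) y = 0"
proof (rule order_antisym)
  obtain n where "t \<le> real n" using real_arch_simple by blast
  then have "inf (t *\<^sub>R x) y \<le> inf (real n *\<^sub>R x) y"
    using assms by (intro inf_mono scaleR_right_mono) auto
  also have "\<dots> \<le> 0" by (rule inf_of_nat_scaleR_le[OF assms(1-3)])
  finally show "inf (t *\<^sub>R x) y \<le> 0" .
  show "0 \<le> inf (t *\<^sub>R x) y" using assms by (simp add: scaleR_nonneg_nonneg)
qed

lemma scaleR_inf_pprt_diff_le: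
  fixes a b :: "'a::riesz_space"
  assumes "0 \<le> a" "0 \<le> b" "0 < M"
  shows "M *\<^sub>R inf (pprt (a - M *\<^sub>R b)) b \<le> a"
proof -
  define P N where "P = pprt (a - M *\<^sub>R b)" and "N = - nprt (a - M *\<^sub>R b)"
  define w where "w = M *\<^sub>R inf P b"
  have "0 \<le> P" "0 \<le> N" "0 \<le> w" using assms by (auto simp: P_def N_def w_def scaleR_nonneg_nonneg)
  have "a - M *\<^sub>R b = P - N"
    using prts[of "a - M *\<^sub>R b"] by (simp add: P_def N_def)
  have "w \<le> M *\<^sub>R P" using assms by (simp add: w_def scaleR_left_mono)
  have "w \<le> M *\<^sub>R b" using assms by (simp add: w_def scaleR_left_mono)
  also have "\<dots> = a + N - P" using \<open>a - M *\<^sub>R b = P - N\<close> by (simp add: algebra_simps)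
  also have "\<dots> \<le> a + N" using \<open>0 \<le> P\<close> by simp
  finally have w_le: "w \<le> a + N" .
  \<comment> \<open>w lies below a + N and is disjoint from N, hence lies below a\<close>
  have "inf w N \<le> inf (M *\<^sub>R P) N" using \<open>w \<le> M *\<^sub>R P\<close> by (rule inf_mono) simp
  also have "\<dots> = 0"
    unfolding P_def N_def
    by (rule inf_scaleR_eq_0) (use assms inf_pprt_neg_nprt in auto)
  finally have "inf w N \<le> 0" .
  have "w = inf w (a + N)" using w_le by (simp add: inf.absorb1)
  also have "\<dots> \<le> inf w a + inf w N"
    using \<open>0 \<le> w\<close> \<open>0 \<le> N\<close> assms by (intro inf_add_le)
  also have "\<dots> \<le> a + 0" using \<open>inf w N \<le> 0\<close> by (intro add_mono) auto
  finally show ?thesis by (simp add: w_def P_def)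
qed

lemma sum_le_add_sum_if_almost_disjoint:
  fixes v w :: "nat \<Rightarrow> 'a::riesz_space"
  assumes "\<And>n. 0 \<le> v n" "\<And>n. v n \<le> u" "\<And>n. 0 \<le> w n"
    and "\<And>i n. i < n \<Longrightarrow> inf (v n) (v i) \<le> w n"
  shows "(\<Sum>n<N. v n) \<le> u + (\<Sum>n<N. real n *\<^sub>R w n)"
proof (induction N)
  case 0
  then show ?case using order_trans[OF assms(1,2)] by simp
next
  case (Suc N)
  define S W where "S = (\<Sum>n<N. v n)" and "W = (\<Sum>n<N. real n *\<^sub>R w n)"
  have "0 \<le> W" unfolding W_def using assms(3) by (simp add: sum_nonneg scaleR_nonneg_nonneg)
  have "sup S (v N) \<le> u + W"
    using Suc assms(2) \<open>0 \<le> W\<close> by (simp add: S_def W_def add_increasing2)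
  moreover have "inf S (v N) \<le> real N *\<^sub>R w N"
  proof -
    have "inf S (v N) \<le> (\<Sum>i<N. inf (v N) (v i))"
      unfolding S_def inf.commute[of _ "v N"] using assms(1) by (intro inf_sum_le) auto
    also have "\<dots> \<le> (\<Sum>i<N. w N)" using assms(4) by (intro sum_mono) simp
    finally show ?thesis by (simp add: sum_constant_scaleR)
  qed
  ultimately have "S + v N \<le> (u + W) + real N *\<^sub>R w N"
    unfolding add_eq_inf_sup[of S] by (rule add_mono)
  then show ?case by (simp add: S_def W_def add.assoc)
qed

lemma lat_abs_nonneg: "0 \<le> lat_abs (x::'a::banach_lattice)"
proof -
  have "x + (- x) \<le> lat_abs x + lat_abs x"
    unfolding lat_abs_def by (intro add_mono) auto
  then show ?thesis by simp
qed

lemma lat_abs_of_nonneg: "0 \<le> (x::'a::banach_lattice) \<Longrightarrow> lat_abs x = x"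
  unfolding lat_abs_def by (simp add: sup.absorb1 order_trans[of "- x" 0 x])

lemma lat_abs_leI: "x \<le> y \<Longrightarrow> - x \<le> y \<Longrightarrow> lat_abs (x::'a::banach_lattice) \<le> y"
  unfolding lat_abs_def by simp

lemma norm_le_if_lat_abs_le: "lat_abs x \<le> lat_abs y \<Longrightarrow> norm x \<le> norm (y::'a::banach_lattice)"
  unfolding lat_abs_def by (rule norm_lattice_mono)

lemma norm_mono_nonneg: "0 \<le> x \<Longrightarrow> x \<le> y \<Longrightarrow> norm x \<le> norm (y::'a::banach_lattice)"
  by (rule norm_le_if_lat_abs_le) (simp add: lat_abs_of_nonneg)

lemma norm_lat_abs: "norm (lat_abs x) = norm (x::'a::banach_lattice)"
  by (intro order_antisym norm_le_if_lat_abs_le) (simp_all add: lat_abs_of_nonneg lat_abs_nonneg)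

lemma norm_pprt_le: "norm (pprt x) \<le> norm (x::'a::banach_lattice)"
proof (rule norm_le_if_lat_abs_le)
  have "pprt x \<le> lat_abs x"
    using lat_abs_nonneg[of x] unfolding pprt_def lat_abs_def by simp
  then show "lat_abs (pprt x) \<le> lat_abs x" by (simp add: lat_abs_of_nonneg)
qed

lemma norm_nprt_le: "norm (nprt x) \<le> norm (x::'a::banach_lattice)"
  using norm_pprt_le[of "- x"] by (simp add: pprt_neg)

section \<open>Weakly null and uaw-null sequences\<close>

lemma weakly_null_if_bounded_partial_sums:
  fixes v :: "nat \<Rightarrow> 'a::banach_lattice"
  assumes nonneg: "\<And>n. 0 \<le> v n" and bounded: "\<And>N. norm (\<Sum>n<N. v n) \<le> C"
  shows "weakly_null v"
  unfolding weakly_null_def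
proof
  fix g :: "'a \<Rightarrow>\<^sub>L real"
  have "(\<Sum>n<N. \<bar>g (v n)\<bar>) \<le> norm g * C" for N
  proof -
    \<comment> \<open>choosing signs turns the sum into g y for some y with modulus below the partial sum\<close>
    define y where "y = (\<Sum>n<N. sgn (g (v n)) *\<^sub>R v n)"
    have "(\<Sum>n<N. \<bar>g (v n)\<bar>) = g y"
      by (simp add: y_def blinfun.sum_right blinfun.scaleR_right abs_sgn mult.commute)
    also have "\<dots> \<le> norm g * norm y"
      using norm_blinfun[of g y] by simp
    also have "norm y \<le> norm (\<Sum>n<N. v n)"
    proof (rule norm_le_if_lat_abs_le)
      have "- v n \<le> v n" for n using nonneg[of n] by (meson neg_le_0_iff_le order_trans)
      then have "sgn (g (v n)) *\<^sub>R v n \<le> v n" "- (sgn (g (v n)) *\<^sub>R v n) \<le> v n" for n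
        using nonneg[of n] by (auto simp: sgn_real_def)
      then have "y \<le> (\<Sum>n<N. v n)" "- y \<le> (\<Sum>n<N. v n)"
        unfolding y_def by (auto intro!: sum_mono simp: sum_negf[symmetric])
      then have "lat_abs y \<le> (\<Sum>n<N. v n)" by (rule lat_abs_leI)
      then show "lat_abs y \<le> lat_abs (\<Sum>n<N. v n)"
        using nonneg by (simp add: lat_abs_of_nonneg sum_nonneg)
    qed
    then have "norm g * norm y \<le> norm g * C"
      using bounded[of N] by (intro mult_left_mono) auto
    finally show ?thesis by simp
  qed
  then have "summable (\<lambda>n. \<bar>g (v n)\<bar>)"
    by (intro summableI_nonneg_bounded) auto
  then show "(\<lambda>n. g (v n)) \<longlonglongrightarrow> 0"
    using summable_LIMSEQ_zero tendsto_rabs_zero_iff by blast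
qed

lemma uaw_null_if_almost_disjoint:
  fixes x w :: "nat \<Rightarrow> 'a::banach_lattice"
  assumes "\<And>n. 0 \<le> x n" "\<And>n. 0 \<le> w n"
    and "\<And>i n. i < n \<Longrightarrow> inf (x n) (x i) \<le> w n"
    and "summable (\<lambda>n. real n * norm (w n))"
  shows "uaw_null x"
  unfolding uaw_null_def
proof (intro allI impI)
  fix u :: 'a assume "0 \<le> u"
  define v where "v n = inf (x n) u" for n
  have v_nonneg: "0 \<le> v n" for n using assms(1) \<open>0 \<le> u\<close> by (simp add: v_def)
  have "norm (\<Sum>n<N. v n) \<le> norm u + (\<Sum>n. real n * norm (w n))" for N
  proof -
    have "inf (v n) (v i) \<le> w n" if "i < n" for i n
    proof -
      have "inf (v n) (v i) \<le> inf (x n) (x i)" unfolding v_def by (intro inf_mono) auto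
      also have "\<dots> \<le> w n" using assms(3) that .
      finally show ?thesis .
    qed
    then have "(\<Sum>n<N. v n) \<le> u + (\<Sum>n<N. real n *\<^sub>R w n)"
      using assms(2) v_nonneg by (intro sum_le_add_sum_if_almost_disjoint) (auto simp: v_def)
    then have "norm (\<Sum>n<N. v n) \<le> norm (u + (\<Sum>n<N. real n *\<^sub>R w n))"
      by (intro norm_mono_nonneg sum_nonneg v_nonneg)
    also have "\<dots> \<le> norm u + norm (\<Sum>n<N. real n *\<^sub>R w n)"
      by (rule norm_triangle_ineq)
    also have "norm (\<Sum>n<N. real n *\<^sub>R w n) \<le> (\<Sum>n<N. real n * norm (w n))"
      by (rule order_trans[OF norm_sum]) simp
    also have "(\<Sum>n<N. real n * norm (w n)) \<le> (\<Sum>n. real n * norm (w n))"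
      using assms(4) by (intro sum_le_suminf) auto
    finally show ?thesis by simp
  qed
  then have "weakly_null v"
    using v_nonneg by (intro weakly_null_if_bounded_partial_sums)
  then show "weakly_null (\<lambda>n. inf (lat_abs (x n)) u)"
    using assms(1) by (simp add: v_def[abs_def] lat_abs_of_nonneg)
qed

lemma uaw_null_pprt_increments:
  fixes s :: "nat \<Rightarrow> 'a::banach_lattice"
  assumes s_nonneg: "\<And>n. 0 \<le> s n" and s_inc: "\<And>n. s n \<le> s (Suc n)"
    and increment_bounded: "\<And>n. norm (s (Suc n) - s n) \<le> 1"
  shows "uaw_null (\<lambda>n. pprt (s (Suc n) - s n - (real (Suc n) * 2 ^ n) *\<^sub>R s n))"
proof -
  \<comment> \<open>the weight makes the n overlaps of x n with its predecessors total at most (1/2)^n\<close>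
  define M where "M n = real (Suc n) * 2 ^ n" for n
  define z where "z n = s (Suc n) - s n" for n
  define x where "x n = pprt (z n - M n *\<^sub>R s n)" for n
  have M_pos: "0 < M n" for n by (simp add: M_def)
  have z_nonneg: "0 \<le> z n" for n using s_inc by (simp add: z_def)
  have x_le_z: "x n \<le> z n" for n
    unfolding x_def using M_pos[of n] s_nonneg[of n] z_nonneg[of n]
    by (intro pprt_diff_le) (simp_all add: scaleR_nonneg_nonneg)
  have almost_disjoint: "inf (x n) (x i) \<le> (1 / M n) *\<^sub>R z n" if "i < n" for i n
  proof -
    have "z i \<le> s (Suc i)" using s_nonneg[of i] by (simp add: z_def)
    with x_le_z have "x i \<le> s (Suc i)" by (rule order_trans)
    also have "\<dots> \<le> s n" using s_inc by (rule lift_Suc_mono_le) (use \<open>i < n\<close> in simp)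
    finally have "inf (x n) (x i) \<le> inf (x n) (s n)" by (simp add: le_infI2)
    also have "\<dots> = (1 / M n) *\<^sub>R (M n *\<^sub>R inf (x n) (s n))" using M_pos[of n] by simp
    also have "\<dots> \<le> (1 / M n) *\<^sub>R z n"
    proof (rule scaleR_left_mono)
      show "M n *\<^sub>R inf (x n) (s n) \<le> z n"
        unfolding x_def using M_pos[of n] s_nonneg[of n] z_nonneg[of n]
        by (intro scaleR_inf_pprt_diff_le) auto
    qed (use M_pos[of n] in simp)
    finally show ?thesis .
  qed
  have summable: "summable (\<lambda>n. real n * norm ((1 / M n) *\<^sub>R z n))"
  proof (rule summable_comparison_test[OF _ summable_geometric[of "1 / 2 :: real"]])
    have "real n * norm ((1 / M n) *\<^sub>R z n) \<le> (1 / 2) ^ n" for n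
    proof -
      have "real n * norm ((1 / M n) *\<^sub>R z n) = real n / M n * norm (z n)"
        using M_pos[of n] by simp
      also have "\<dots> \<le> real n / M n"
        using increment_bounded[of n] M_pos[of n] by (intro mult_left_le) (simp_all add: z_def)
      also have "\<dots> \<le> real (Suc n) / M n"
        using M_pos[of n] by (intro divide_right_mono) simp_all
      also have "\<dots> = (1 / 2) ^ n" by (simp add: M_def power_one_over)
      finally show ?thesis .
    qed
    then show "\<exists>N. \<forall>n\<ge>N. norm (real n * norm ((1 / M n) *\<^sub>R z n)) \<le> (1 / 2) ^ n"
      by simp
  qed simp
  have "uaw_null x"
    by (rule uaw_null_if_almost_disjoint[OF _ _ almost_disjoint summable])
      (use M_pos z_nonneg in \<open>auto simp: x_def scaleR_nonneg_nonneg less_imp_le\<close>)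
  then show ?thesis unfolding x_def[abs_def] z_def M_def .
qed

section \<open>Positive functionals and order continuity of the dual norm\<close>

definition down_directed :: "('a \<Rightarrow> 'a \<Rightarrow> bool) \<Rightarrow> 'a set \<Rightarrow> bool" where
  "down_directed le D \<longleftrightarrow> D \<noteq> {} \<and> (\<forall>x\<in>D. \<forall>y\<in>D. \<exists>z\<in>D. le z x \<and> le z y)"

definition down_directed_to_zero :: "('a::zero \<Rightarrow> 'a \<Rightarrow> bool) \<Rightarrow> 'a set \<Rightarrow> bool" where
  "down_directed_to_zero le D \<longleftrightarrow>
     down_directed le D \<and> (\<forall>x\<in>D. le 0 x) \<and> (\<forall>l. (\<forall>x\<in>D. le l x) \<longrightarrow> le l 0)"

lemma oc_norm_rel_iff:
  "oc_norm_rel le \<longleftrightarrow> (\<forall>D. down_directed_to_zero le D \<longrightarrow> (\<forall>e>0. \<exists>x\<in>D. norm x < e))"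
  by (simp add: oc_norm_rel_def down_directed_to_zero_def down_directed_def conj_assoc)

lemma not_oc_norm_relE:
  assumes "\<not> oc_norm_rel le"
  obtains D e where "down_directed_to_zero le D" "0 < e" "\<forall>x\<in>D. e \<le> norm x"
  using assms unfolding oc_norm_rel_iff by (auto simp: not_less)

lemma oc_norm_rel_if_trivial:
  fixes le :: "'a::real_normed_vector \<Rightarrow> 'a \<Rightarrow> bool"
  assumes "\<And>x::'a. x = 0"
  shows "oc_norm_rel le"
  unfolding oc_norm_rel_iff
proof (intro allI impI)
  fix D :: "'a set" and e :: real
  assume "down_directed_to_zero le D" "0 < e"
  then obtain d where "d \<in> D" by (auto simp: down_directed_to_zero_def down_directed_def)
  moreover have "norm d < e" using assms[of d] \<open>0 < e\<close> by simp
  ultimately show "\<exists>x\<in>D. norm x < e" by blast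
qed

lemma dual_le_refl: "dual_le f f"
  by (simp add: dual_le_def)

lemma dual_le_trans: "dual_le f g \<Longrightarrow> dual_le g h \<Longrightarrow> dual_le f h"
  unfolding dual_le_def by (meson order_trans)

lemma dual_le_descending_chain:
  assumes "\<And>n. dual_le (\<psi> (Suc n)) (\<psi> n)"
  shows "dual_le (\<psi> n) (\<psi> 0)"
proof (induction n)
  case (Suc n)
  then show ?case using assms by (rule dual_le_trans[rotated])
qed (rule dual_le_refl)

lemma dual_nonneg_mono:
  assumes "dual_le 0 f" "x \<le> y"
  shows "f x \<le> f y"
proof -
  have "0 \<le> f (y - x)" using assms by (simp add: dual_le_def)
  then show ?thesis by (simp add: blinfun.diff_right)
qed

lemma abs_le_apply_lat_abs:
  assumes "dual_le 0 f"
  shows "\<bar>f x\<bar> \<le> f (lat_abs x)"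
proof -
  have "f x \<le> f (lat_abs x)" "f (- x) \<le> f (lat_abs x)"
    using assms by (auto intro!: dual_nonneg_mono simp: lat_abs_def)
  then show ?thesis by (simp add: blinfun.minus_right)
qed

lemma dual_nonneg_norm_approx:
  assumes "dual_le 0 f" "c < norm f"
  shows "\<exists>z\<ge>0. norm z \<le> 1 \<and> c < f z"
proof (rule ccontr)
  assume "\<not> ?thesis"
  then have le_c: "f z \<le> c" if "0 \<le> z" "norm z \<le> 1" for z
    using that by (meson not_less)
  have "0 \<le> c" using le_c[of 0] by simp
  have "\<bar>f x\<bar> \<le> c * norm x" for x
  proof (cases "x = 0")
    case False
    define z where "z = (1 / norm x) *\<^sub>R lat_abs x"
    have "0 \<le> z" "norm z \<le> 1"
      using False lat_abs_nonneg[of x] by (simp_all add: z_def scaleR_nonneg_nonneg norm_lat_abs)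
    then have "f z \<le> c" by (rule le_c)
    then have "f (lat_abs x) \<le> c * norm x"
      using False by (simp add: z_def blinfun.scaleR_right field_simps)
    then show ?thesis using abs_le_apply_lat_abs[OF assms(1)] order_trans by blast
  qed simp
  then have "norm f \<le> c"
    using \<open>0 \<le> c\<close> by (intro norm_blinfun_bound) simp_all
  then show False using assms(2) by simp
qed

lemma cone_additive_diff_eq:
  fixes L :: "'a::ordered_ab_group_add \<Rightarrow> 'b::ab_group_add"
  assumes add: "\<And>x y. 0 \<le> x \<Longrightarrow> 0 \<le> y \<Longrightarrow> L (x + y) = L x + L y"
    and "0 \<le> p" "0 \<le> n" "0 \<le> p'" "0 \<le> n'" "p - n = p' - n'"
  shows "L p - L n = L p' - L n'"
proof -
  have "p + n' = p' + n" using assms(6) by (simp add: algebra_simps)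
  then have "L p + L n' = L p' + L n" using add[OF assms(2,5)] add[OF assms(4,3)] by simp
  then show ?thesis by (simp add: algebra_simps)
qed

lemma linear_diff_pprt_nprt:
  fixes L :: "'a::riesz_space \<Rightarrow> real"
  assumes add: "\<And>x y. 0 \<le> x \<Longrightarrow> 0 \<le> y \<Longrightarrow> L (x + y) = L x + L y"
    and hom: "\<And>t x. 0 \<le> t \<Longrightarrow> 0 \<le> x \<Longrightarrow> L (t *\<^sub>R x) = t * L x"
  shows "linear (\<lambda>x. L (pprt x) - L (- nprt x))" (is "linear ?l")
proof (rule linearI)
  have l_eq: "?l x = L p - L n" if "0 \<le> p" "0 \<le> n" "x = p - n" for x p n
    by (rule cone_additive_diff_eq[OF add]) (use that in \<open>simp_all flip: prts\<close>)
  show "?l (x + y) = ?l x + ?l y" for x y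
  proof -
    have "(pprt x + pprt y) - (- nprt x + - nprt y) = (pprt x + nprt x) + (pprt y + nprt y)"
      by (simp add: algebra_simps)
    then have "?l (x + y) = L (pprt x + pprt y) - L (- nprt x + - nprt y)"
      by (intro l_eq add_nonneg_nonneg) (simp_all flip: prts)
    then show ?thesis
      using add[of "pprt x" "pprt y"] add[of "- nprt x" "- nprt y"] by simp
  qed
  show "?l (t *\<^sub>R x) = t *\<^sub>R ?l x" for t x
  proof (cases "0 \<le> t")
    case True
    have "t *\<^sub>R pprt x - t *\<^sub>R (- nprt x) = t *\<^sub>R (pprt x + nprt x)"
      by (simp add: algebra_simps)
    then have "?l (t *\<^sub>R x) = L (t *\<^sub>R pprt x) - L (t *\<^sub>R (- nprt x))"
      using True by (intro l_eq scaleR_nonneg_nonneg) (simp_all flip: prts)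
    then show ?thesis
      using hom[OF True, of "pprt x"] hom[OF True, of "- nprt x"] by (simp add: algebra_simps)
  next
    case False
    have "(- t) *\<^sub>R (- nprt x) - (- t) *\<^sub>R pprt x = t *\<^sub>R (pprt x + nprt x)"
      by (simp add: algebra_simps)
    then have "?l (t *\<^sub>R x) = L ((- t) *\<^sub>R (- nprt x)) - L ((- t) *\<^sub>R pprt x)"
      using False by (intro l_eq scaleR_nonneg_nonneg) (simp_all flip: prts)
    then show ?thesis
      using False hom[of "- t" "pprt x"] hom[of "- t" "- nprt x"] by (simp add: algebra_simps)
  qed
qed

lemma positive_additive_extends_to_blinfun:
  fixes L :: "'a::banach_lattice \<Rightarrow> real"
  assumes add: "\<And>x y. 0 \<le> x \<Longrightarrow> 0 \<le> y \<Longrightarrow> L (x + y) = L x + L y"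
    and hom: "\<And>t x. 0 \<le> t \<Longrightarrow> 0 \<le> x \<Longrightarrow> L (t *\<^sub>R x) = t * L x"
    and bound: "\<And>x. 0 \<le> x \<Longrightarrow> \<bar>L x\<bar> \<le> C * norm x" and "0 \<le> C"
  obtains l :: "'a \<Rightarrow>\<^sub>L real" where "\<And>x. 0 \<le> x \<Longrightarrow> l x = L x"
proof -
  define l where "l x = L (pprt x) - L (- nprt x)" for x
  have "linear l" unfolding l_def[abs_def] using add hom by (rule linear_diff_pprt_nprt)
  have bounded: "norm (l x) \<le> norm x * (2 * C)" for x
  proof -
    have "\<bar>L (pprt x)\<bar> \<le> C * norm x"
      using bound[of "pprt x"] norm_pprt_le[of x] \<open>0 \<le> C\<close>
      by (simp, meson mult_left_mono order_trans)
    moreover have "\<bar>L (- nprt x)\<bar> \<le> C * norm x"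
      using bound[of "- nprt x"] norm_nprt_le[of x] \<open>0 \<le> C\<close>
      by (simp, meson mult_left_mono order_trans)
    moreover have "norm x * (2 * C) = 2 * (C * norm x)" by simp
    ultimately show ?thesis unfolding l_def real_norm_def by linarith
  qed
  have "bounded_linear l"
    using linear_add[OF \<open>linear l\<close>] linear_scale[OF \<open>linear l\<close>] bounded
    by (rule bounded_linear_intro)
  moreover have "l x = L x" if "0 \<le> x" for x
    using that hom[of 0 0] by (simp add: l_def)
  ultimately show thesis
    using that[of "Blinfun l"] by (simp add: bounded_linear_Blinfun_apply)
qed

definition pointwise_Inf :: "('a::banach_lattice \<Rightarrow>\<^sub>L real) set \<Rightarrow> 'a \<Rightarrow> real" where
  "pointwise_Inf D x = (INF \<phi>\<in>D. blinfun_apply \<phi> x)"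

context
  fixes D :: "('a::banach_lattice \<Rightarrow>\<^sub>L real) set"
  assumes directed: "down_directed dual_le D"
    and nonneg: "\<And>\<phi>. \<phi> \<in> D \<Longrightarrow> dual_le 0 \<phi>"
begin

lemma bdd_below_dual_apply: "0 \<le> x \<Longrightarrow> bdd_below ((\<lambda>\<phi>. blinfun_apply \<phi> x) ` D)"
  using nonneg by (auto simp: dual_le_def intro!: bdd_belowI2[where m = 0])

lemma pointwise_Inf_le: "\<phi> \<in> D \<Longrightarrow> 0 \<le> x \<Longrightarrow> pointwise_Inf D x \<le> \<phi> x"
  unfolding pointwise_Inf_def by (rule cINF_lower[OF bdd_below_dual_apply])

lemma pointwise_Inf_greatest: "(\<And>\<phi>. \<phi> \<in> D \<Longrightarrow> c \<le> \<phi> x) \<Longrightarrow> c \<le> pointwise_Inf D x"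
  unfolding pointwise_Inf_def using directed by (intro cINF_greatest) (auto simp: down_directed_def)

lemma pointwise_Inf_less_iff: "0 \<le> x \<Longrightarrow> pointwise_Inf D x < c \<longleftrightarrow> (\<exists>\<phi>\<in>D. \<phi> x < c)"
  unfolding pointwise_Inf_def using directed
  by (intro cINF_less_iff bdd_below_dual_apply) (auto simp: down_directed_def)

lemma pointwise_Inf_nonneg: "0 \<le> x \<Longrightarrow> 0 \<le> pointwise_Inf D x"
  using nonneg by (intro pointwise_Inf_greatest) (simp add: dual_le_def)

lemma pointwise_Inf_add:
  assumes "0 \<le> x" "0 \<le> y"
  shows "pointwise_Inf D (x + y) = pointwise_Inf D x + pointwise_Inf D y"
proof (rule order_antisym)
  show "pointwise_Inf D x + pointwise_Inf D y \<le> pointwise_Inf D (x + y)"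
  proof (rule pointwise_Inf_greatest)
    fix \<phi> assume "\<phi> \<in> D"
    then show "pointwise_Inf D x + pointwise_Inf D y \<le> \<phi> (x + y)"
      using pointwise_Inf_le[OF _ assms(1)] pointwise_Inf_le[OF _ assms(2)]
      by (simp add: blinfun.add_right add_mono)
  qed
  show "pointwise_Inf D (x + y) \<le> pointwise_Inf D x + pointwise_Inf D y"
  proof (rule field_le_epsilon)
    fix \<epsilon> :: real
    assume "0 < \<epsilon>"
    obtain \<phi>\<^sub>1 where \<phi>\<^sub>1: "\<phi>\<^sub>1 \<in> D" "\<phi>\<^sub>1 x < pointwise_Inf D x + \<epsilon> / 2"
      using pointwise_Inf_less_iff[OF assms(1), of "pointwise_Inf D x + \<epsilon> / 2"] \<open>0 < \<epsilon>\<close> by auto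
    obtain \<phi>\<^sub>2 where \<phi>\<^sub>2: "\<phi>\<^sub>2 \<in> D" "\<phi>\<^sub>2 y < pointwise_Inf D y + \<epsilon> / 2"
      using pointwise_Inf_less_iff[OF assms(2), of "pointwise_Inf D y + \<epsilon> / 2"] \<open>0 < \<epsilon>\<close> by auto
    obtain \<phi> where "\<phi> \<in> D" "dual_le \<phi> \<phi>\<^sub>1" "dual_le \<phi> \<phi>\<^sub>2"
      using directed \<phi>\<^sub>1(1) \<phi>\<^sub>2(1) by (auto simp: down_directed_def)
    then have "pointwise_Inf D (x + y) \<le> \<phi> x + \<phi> y"
      using assms pointwise_Inf_le[of \<phi> "x + y"] by (simp add: blinfun.add_right)
    also have "\<dots> \<le> \<phi>\<^sub>1 x + \<phi>\<^sub>2 y"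
      using \<open>dual_le \<phi> \<phi>\<^sub>1\<close> \<open>dual_le \<phi> \<phi>\<^sub>2\<close> assms by (intro add_mono) (simp_all add: dual_le_def)
    finally show "pointwise_Inf D (x + y) \<le> pointwise_Inf D x + pointwise_Inf D y + \<epsilon>"
      using \<phi>\<^sub>1 \<phi>\<^sub>2 by simp
  qed
qed

lemma pointwise_Inf_scaleR:
  assumes "0 \<le> t" "0 \<le> x"
  shows "pointwise_Inf D (t *\<^sub>R x) = t * pointwise_Inf D x"
proof (cases "t = 0")
  case True
  obtain \<phi> where "\<phi> \<in> D" using directed by (auto simp: down_directed_def)
  then have "pointwise_Inf D 0 \<le> 0" using pointwise_Inf_le[of \<phi> 0] by simp
  then show ?thesis using True pointwise_Inf_nonneg[of 0] by simp
next
  case False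
  with assms have "0 < t" by simp
  show ?thesis
  proof (rule order_antisym)
    have "pointwise_Inf D (t *\<^sub>R x) / t \<le> pointwise_Inf D x"
    proof (rule pointwise_Inf_greatest)
      fix \<phi> assume "\<phi> \<in> D"
      then have "pointwise_Inf D (t *\<^sub>R x) \<le> t * \<phi> x"
        using pointwise_Inf_le[of \<phi> "t *\<^sub>R x"] assms
        by (simp add: blinfun.scaleR_right scaleR_nonneg_nonneg)
      then show "pointwise_Inf D (t *\<^sub>R x) / t \<le> \<phi> x"
        using \<open>0 < t\<close> by (simp add: divide_le_eq mult.commute)
    qed
    then show "pointwise_Inf D (t *\<^sub>R x) \<le> t * pointwise_Inf D x"
      using \<open>0 < t\<close> by (simp add: divide_le_eq mult.commute)
    show "t * pointwise_Inf D x \<le> pointwise_Inf D (t *\<^sub>R x)"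
      using assms pointwise_Inf_le
      by (intro pointwise_Inf_greatest) (simp add: blinfun.scaleR_right mult_left_mono)
  qed
qed

lemma pointwise_Inf_blinfun:
  obtains l :: "'a \<Rightarrow>\<^sub>L real" where "\<And>x. 0 \<le> x \<Longrightarrow> l x = pointwise_Inf D x"
proof -
  obtain \<phi> where "\<phi> \<in> D" using directed by (auto simp: down_directed_def)
  have bound: "\<bar>pointwise_Inf D x\<bar> \<le> norm \<phi> * norm x" if "0 \<le> x" for x
  proof -
    have "\<bar>pointwise_Inf D x\<bar> \<le> \<phi> x"
      using pointwise_Inf_nonneg pointwise_Inf_le \<open>\<phi> \<in> D\<close> that by simp
    also have "\<dots> \<le> norm \<phi> * norm x"
      using norm_blinfun[of \<phi> x] by simp
    finally show ?thesis .
  qed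
  show thesis
    by (rule positive_additive_extends_to_blinfun[OF pointwise_Inf_add pointwise_Inf_scaleR bound
          norm_ge_zero that])
qed

end

text \<open>The pointwise infimum extends to a functional below D, so the infimum 0 of D dominates it.\<close>

lemma pointwise_Inf_eq_0:
  assumes D: "down_directed_to_zero dual_le D" and "0 \<le> x"
  shows "pointwise_Inf D x = 0"
proof -
  have directed: "down_directed dual_le D" and nonneg: "\<And>\<phi>. \<phi> \<in> D \<Longrightarrow> dual_le 0 \<phi>"
    using D by (auto simp: down_directed_to_zero_def)
  obtain l :: "'a \<Rightarrow>\<^sub>L real" where l: "\<And>x. 0 \<le> x \<Longrightarrow> l x = pointwise_Inf D x"
    using pointwise_Inf_blinfun[OF directed nonneg] by blast
  have "dual_le l \<phi>" if "\<phi> \<in> D" for \<phi>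
    using l pointwise_Inf_le[OF directed nonneg that] by (simp add: dual_le_def)
  then have "dual_le l 0" using D by (simp add: down_directed_to_zero_def)
  then have "pointwise_Inf D x \<le> 0" using l \<open>0 \<le> x\<close> by (simp add: dual_le_def)
  then show ?thesis
    using pointwise_Inf_nonneg[OF directed nonneg \<open>0 \<le> x\<close>] by simp
qed

lemma down_directed_to_zero_below_small:
  assumes D: "down_directed_to_zero dual_le D" and "\<psi> \<in> D" "0 \<le> s" "0 < c"
  obtains \<phi> where "\<phi> \<in> D" "dual_le \<phi> \<psi>" "\<phi> s < c"
proof -
  have directed: "down_directed dual_le D" and nonneg: "\<And>\<phi>. \<phi> \<in> D \<Longrightarrow> dual_le 0 \<phi>"
    using D by (auto simp: down_directed_to_zero_def)
  obtain \<phi>' where "\<phi>' \<in> D" "\<phi>' s < c"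
    using pointwise_Inf_less_iff[OF directed nonneg \<open>0 \<le> s\<close>] pointwise_Inf_eq_0[OF D \<open>0 \<le> s\<close>]
      \<open>0 < c\<close> by auto
  moreover obtain \<phi> where "\<phi> \<in> D" "dual_le \<phi> \<phi>'" "dual_le \<phi> \<psi>"
    using directed \<open>\<phi>' \<in> D\<close> \<open>\<psi> \<in> D\<close> by (auto simp: down_directed_def)
  ultimately show thesis
    using that \<open>0 \<le> s\<close> by (force simp: dual_le_def)
qed

lemma down_directed_to_zero_sequence:
  assumes D: "down_directed_to_zero dual_le D" and "\<And>n. 0 < c n" and "b < e"
    and large: "\<forall>\<phi>\<in>D. e \<le> norm \<phi>"
  obtains \<psi> :: "nat \<Rightarrow> 'a::banach_lattice \<Rightarrow>\<^sub>L real" and s :: "nat \<Rightarrow> 'a"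
  where "\<And>n. \<psi> n \<in> D" "\<And>n. dual_le (\<psi> (Suc n)) (\<psi> n)" "\<And>n. 0 \<le> s n" "\<And>n. s n \<le> s (Suc n)"
    "\<And>n. norm (s (Suc n) - s n) \<le> 1" "\<And>n. \<psi> (Suc n) (s n) < c n"
    "\<And>n. b < \<psi> (Suc n) (s (Suc n) - s n)"
proof -
  define P where "P \<sigma> \<longleftrightarrow> fst \<sigma> \<in> D \<and> 0 \<le> snd \<sigma>" for \<sigma> :: "('a \<Rightarrow>\<^sub>L real) \<times> 'a"
  define Q where "Q n \<sigma> \<sigma>' \<longleftrightarrow> dual_le (fst \<sigma>') (fst \<sigma>) \<and> snd \<sigma> \<le> snd \<sigma>'
      \<and> norm (snd \<sigma>' - snd \<sigma>) \<le> 1 \<and> fst \<sigma>' (snd \<sigma>) < c n \<and> b < fst \<sigma>' (snd \<sigma>' - snd \<sigma>)"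
    for n :: nat and \<sigma> \<sigma>' :: "('a \<Rightarrow>\<^sub>L real) \<times> 'a"
  obtain \<phi>\<^sub>0 where "\<phi>\<^sub>0 \<in> D" using D by (auto simp: down_directed_to_zero_def down_directed_def)
  then have "P (\<phi>\<^sub>0, 0)" by (simp add: P_def)
  moreover have "\<exists>\<sigma>'. P \<sigma>' \<and> Q n \<sigma> \<sigma>'" if \<sigma>: "P \<sigma>" for n \<sigma>
  proof -
    have "fst \<sigma> \<in> D" "0 \<le> snd \<sigma>" using \<sigma> by (simp_all add: P_def)
    then obtain \<phi> where \<phi>: "\<phi> \<in> D" "dual_le \<phi> (fst \<sigma>)" "\<phi> (snd \<sigma>) < c n"
      using \<open>0 < c n\<close> by (rule down_directed_to_zero_below_small[OF D])
    have "dual_le 0 \<phi>" using D \<open>\<phi> \<in> D\<close> by (simp add: down_directed_to_zero_def)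
    moreover have "b < norm \<phi>" using large \<open>\<phi> \<in> D\<close> \<open>b < e\<close> by fastforce
    ultimately obtain z where "0 \<le> z" "norm z \<le> 1" "b < \<phi> z"
      using dual_nonneg_norm_approx by blast
    with \<phi> have "P (\<phi>, snd \<sigma> + z) \<and> Q n \<sigma> (\<phi>, snd \<sigma> + z)"
      using \<sigma> by (simp add: P_def Q_def)
    then show ?thesis by blast
  qed
  ultimately obtain \<sigma> where "\<And>n. P (\<sigma> n) \<and> Q n (\<sigma> n) (\<sigma> (Suc n))"
    using dependent_nat_choice[of "\<lambda>_. P" Q] by blast
  then show thesis
    using that[of "\<lambda>n. fst (\<sigma> n)" "\<lambda>n. snd (\<sigma> n)"] by (simp add: P_def Q_def)
qed

lemma exists_uaw_null_not_weakly_null: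
  assumes "\<not> dual_order_continuous_norm TYPE('a)"
  obtains x :: "nat \<Rightarrow> 'a::banach_lattice" and f :: "'a \<Rightarrow>\<^sub>L real" and c :: real
  where "bounded (range x)" "uaw_null x" "0 < c" "\<And>n. c \<le> f (x n)"
proof -
  obtain D :: "('a \<Rightarrow>\<^sub>L real) set" and e :: real
    where D: "down_directed_to_zero dual_le D" and "0 < e" and large: "\<forall>\<phi>\<in>D. e \<le> norm \<phi>"
    using assms by (rule not_oc_norm_relE)
  define M where "M n = real (Suc n) * 2 ^ n" for n
  have M_pos: "0 < M n" for n by (simp add: M_def)
  have c_pos: "0 < e / (4 * M n)" for n using M_pos[of n] \<open>0 < e\<close> by simp
  have "e / 2 < e" using \<open>0 < e\<close> by simp
  obtain \<psi> :: "nat \<Rightarrow> 'a \<Rightarrow>\<^sub>L real" and s :: "nat \<Rightarrow> 'a"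
    where \<psi>: "\<And>n. \<psi> n \<in> D" "\<And>n. dual_le (\<psi> (Suc n)) (\<psi> n)"
      and s: "\<And>n. 0 \<le> s n" "\<And>n. s n \<le> s (Suc n)" "\<And>n. norm (s (Suc n) - s n) \<le> 1"
      and small: "\<And>n. \<psi> (Suc n) (s n) < e / (4 * M n)"
      and large_increment: "\<And>n. e / 2 < \<psi> (Suc n) (s (Suc n) - s n)"
    by (rule down_directed_to_zero_sequence[where c = "\<lambda>n. e / (4 * M n)",
          OF D c_pos \<open>e / 2 < e\<close> large]) (rule that)
  define x where "x n = pprt (s (Suc n) - s n - M n *\<^sub>R s n)" for n
  have x_nonneg: "0 \<le> x n" for n by (simp add: x_def)
  have uaw: "uaw_null x"
    using uaw_null_pprt_increments[of s, OF s] unfolding x_def[abs_def] M_def .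
  have "x n \<le> s (Suc n) - s n" for n
    unfolding x_def using s M_pos[of n] by (intro pprt_diff_le) (simp_all add: scaleR_nonneg_nonneg)
  then have "norm (x n) \<le> 1" for n
    using order_trans[OF norm_mono_nonneg[OF x_nonneg] s(3)] by blast
  then have bounded: "bounded (range x)" unfolding bounded_iff by blast
  have low: "e / 4 \<le> \<psi> 0 (x n)" for n
  proof -
    have "M n * \<psi> (Suc n) (s n) \<le> e / 4"
      using small[of n] M_pos[of n] by (simp add: field_simps)
    then have "e / 4 \<le> \<psi> (Suc n) (s (Suc n) - s n - M n *\<^sub>R s n)"
      using large_increment[of n] by (simp add: blinfun.diff_right blinfun.scaleR_right)
    also have "\<dots> \<le> \<psi> (Suc n) (x n)"
      using D \<psi>(1)
      by (intro dual_nonneg_mono) (simp_all add: x_def pprt_def down_directed_to_zero_def)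
    also have "\<dots> \<le> \<psi> 0 (x n)"
      using dual_le_descending_chain[of \<psi>, OF \<psi>(2)] x_nonneg by (simp add: dual_le_def)
    finally show ?thesis .
  qed
  show thesis
    using \<open>0 < e\<close> by (intro that[OF bounded uaw _ low]) simp
qed

definition rank_one ::
    "('a::real_normed_vector \<Rightarrow>\<^sub>L real) \<Rightarrow> 'b::real_normed_vector \<Rightarrow> 'a \<Rightarrow>\<^sub>L 'b" where
  "rank_one f y = blinfun_scaleR_left y o\<^sub>L f"

lemma rank_one_apply: "rank_one f y x = f x *\<^sub>R y"
  by (simp add: rank_one_def)

lemma weak_DP_rank_one: "weak_DP (rank_one f y)"
  unfolding weak_DP_def
proof (intro allI impI)
  fix x :: "nat \<Rightarrow> 'a" and g :: "nat \<Rightarrow> 'b \<Rightarrow>\<^sub>L real"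
  assume "weakly_null x \<and> weakly_null g"
  then have "(\<lambda>n. f (x n)) \<longlonglongrightarrow> 0" and g_null: "weakly_null g"
    by (auto simp: weakly_null_def)
  have "bounded_linear (\<lambda>h :: 'b \<Rightarrow>\<^sub>L real. blinfun_apply h y)"
    by (rule bounded_bilinear.bounded_linear_left[OF bounded_bilinear_blinfun_apply])
  moreover have "(\<lambda>n. Blinfun (\<lambda>h :: 'b \<Rightarrow>\<^sub>L real. blinfun_apply h y) (g n)) \<longlonglongrightarrow> 0"
    using g_null by (simp add: weakly_null_def)
  ultimately have "(\<lambda>n. g n y) \<longlonglongrightarrow> 0"
    by (simp add: bounded_linear_Blinfun_apply)
  with \<open>(\<lambda>n. f (x n)) \<longlonglongrightarrow> 0\<close> have "(\<lambda>n. f (x n) * g n y) \<longlonglongrightarrow> 0"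
    by (rule tendsto_mult_zero)
  then show "(\<lambda>n. g n (rank_one f y (x n))) \<longlonglongrightarrow> 0"
    by (simp add: rank_one_apply blinfun.scaleR_right)
qed

lemma not_uaw_DP_rank_one:
  fixes x :: "nat \<Rightarrow> 'a::banach_lattice" and f :: "'a \<Rightarrow>\<^sub>L real" and y :: "'b::real_normed_vector"
  assumes "bounded (range x)" "uaw_null x" "0 < c" "\<And>n. c \<le> f (x n)" "y \<noteq> 0"
  shows "\<not> uaw_DP (rank_one f y)"
proof
  assume "uaw_DP (rank_one f y)"
  then have "(\<lambda>n. \<bar>f (x n)\<bar> * norm y) \<longlonglongrightarrow> 0"
    using assms(1,2) by (simp add: uaw_DP_def rank_one_apply)
  moreover have "0 < c * norm y" using assms(3,5) by simp
  ultimately have "eventually (\<lambda>n. \<bar>f (x n)\<bar> * norm y < c * norm y) sequentially"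
    by (rule order_tendstoD(2))
  then obtain n where "\<bar>f (x n)\<bar> * norm y < c * norm y"
    by (auto simp: eventually_sequentially)
  moreover have "c * norm y \<le> \<bar>f (x n)\<bar> * norm y"
    using assms(4)[of n] assms(3) by (intro mult_right_mono) auto
  ultimately show False by simp
qed

theorem theorem4p3:
  assumes "\<forall>T :: 'a::banach_lattice \<Rightarrow>\<^sub>L 'b::banach_lattice. weak_DP T \<longrightarrow> uaw_DP T"
  shows "dual_order_continuous_norm TYPE('a) \<or> order_continuous_norm TYPE('b)"
proof (rule ccontr)
  assume "\<not> ?thesis"
  then have not_dual_oc: "\<not> dual_order_continuous_norm TYPE('a)"
    and not_oc: "\<not> order_continuous_norm TYPE('b)" by simp_all
  obtain x :: "nat \<Rightarrow> 'a" and f :: "'a \<Rightarrow>\<^sub>L real" and c :: real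
    where "bounded (range x)" "uaw_null x" "0 < c" "\<And>n. c \<le> f (x n)"
    by (rule exists_uaw_null_not_weakly_null[OF not_dual_oc]) (rule that)
  moreover obtain y :: 'b where "y \<noteq> 0"
    using not_oc oc_norm_rel_if_trivial[where 'a = 'b] by metis
  ultimately have "\<not> uaw_DP (rank_one f y)" by (rule not_uaw_DP_rank_one)
  moreover have "uaw_DP (rank_one f y)" using assms weak_DP_rank_one[of f y] by blast
  ultimately show False by simp
qed

end
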